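(* Let $\mathcal{H} = \mathbb{C}^2 \otimes \mathbb{C}^2$ with standard basis $e_1, e_2$ of $\mathbb{C}^2$, let $\mathfrak{N}_1 = \mathbb{B}(\mathbb{C}^2) \otimes I$ and $\mathfrak{N}_2 = I \otimes \mathbb{B}(\mathbb{C}^2)$, and let $$\Psi_2 = \tfrac{1}{2}\, e_1 \otimes e_1 + \tfrac{\sqrt{3}}{2}\, e_2 \otimes e_2 .$$ Then the vector state $\omega(X) = \langle \Psi_2, X\Psi_2\rangle$ on $\mathfrak{N}_1 \vee \mathfrak{N}_2 = \mathbb{B}(\mathcal{H})$ is not an EPR state for incommensurable pairs.
   Context: $[X,Y] = XY - YX$, $|X|^2 = X^*X$. For commuting self-adjoint operators $A_1, A_2$, a normal state $\omega$ is an EPR state for $(A_1, A_2)$ if $\omega((A_1 - A_2)^2) = 0$. A normal state $\omega$ of $\mathfrak{N}_1 \vee \mathfrak{N}_2$ (where $\mathfrak{N}_1 \subseteq \mathfrak{N}_2'$) is an EPR state for incommensurable pairs if there exist projections $E_1, F_1 \in \mathfrak{N}_1$ and $E_2, F_2 \in \mathfrak{N}_2$ such that $\omega$ is an EPR state for $(E_1,E_2)$ and for $(F_1,F_2)$, $\omega(|[E_1,F_1]|^2) \neq 0$, and $\omega(|[E_2,F_2]|^2) \neq 0$. *)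

theory Defs
  imports "HOL-Analysis.Analysis"
begin

text \<open>Standard basis index of C^2: e1 corresponds to B1, e2 to B2.\<close>
datatype basis2 = B1 | B2

lemma UNIV_basis2: "(UNIV :: basis2 set) = {B1, B2}"
  using basis2.exhaust by auto

instance basis2 :: finite
  by standard (simp add: UNIV_basis2)

type_synonym 'n op = "complex^'n^'n"

definition adj :: "'n::finite op \<Rightarrow> 'n op" where
  "adj M = (\<chi> i j. cnj (M $ j $ i))"

definition commutator :: "'n::finite op \<Rightarrow> 'n op \<Rightarrow> 'n op" where
  "commutator X Y = X ** Y - Y ** X"

definition abs_sq :: "'n::finite op \<Rightarrow> 'n op" where
  "abs_sq X = adj X ** X"

definition is_projection :: "'n::finite op \<Rightarrow> bool" where
  "is_projection P \<longleftrightarrow> P ** P = P \<and> adj P = P"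

definition tensor_op :: "'m::finite op \<Rightarrow> 'n::finite op \<Rightarrow> ('m \<times> 'n) op" where
  "tensor_op A B = (\<chi> p q. A $ fst p $ fst q * B $ snd p $ snd q)"

definition N1 :: "(basis2 \<times> basis2) op set" where
  "N1 = {tensor_op A (mat 1) | A. True}"

definition N2 :: "(basis2 \<times> basis2) op set" where
  "N2 = {tensor_op (mat 1) B | B. True}"

definition vector_state :: "complex^'n::finite \<Rightarrow> 'n op \<Rightarrow> complex" where
  "vector_state \<Psi> X = (\<Sum>i\<in>UNIV. cnj (\<Psi> $ i) * (X *v \<Psi>) $ i)"

definition Psi2 :: "complex^(basis2 \<times> basis2)" where
  "Psi2 = (\<chi> p. if p = (B1, B1) then 1/2
                     else if p = (B2, B2) then complex_of_real (sqrt 3 / 2) else 0)"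

definition EPR_state :: "('n::finite op \<Rightarrow> complex) \<Rightarrow> 'n op \<Rightarrow> 'n op \<Rightarrow> bool" where
  "EPR_state \<omega> A1 A2 \<longleftrightarrow> \<omega> ((A1 - A2) ** (A1 - A2)) = 0"

definition EPR_incommensurable ::
  "('n::finite op \<Rightarrow> complex) \<Rightarrow> 'n op set \<Rightarrow> 'n op set \<Rightarrow> bool" where
  "EPR_incommensurable \<omega> M1 M2 \<longleftrightarrow>
     (\<exists>E1 F1 E2 F2. E1 \<in> M1 \<and> F1 \<in> M1 \<and> E2 \<in> M2 \<and> F2 \<in> M2 \<and>
        is_projection E1 \<and> is_projection F1 \<and> is_projection E2 \<and> is_projection F2 \<and>
        EPR_state \<omega> E1 E2 \<and> EPR_state \<omega> F1 F2 \<and>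
        \<omega> (abs_sq (commutator E1 F1)) \<noteq> 0 \<and>
        \<omega> (abs_sq (commutator E2 F2)) \<noteq> 0)"

end

theory Submission
  imports Defs
begin

text \<open>For a self-adjoint \<open>X\<close>, \<open>\<omega>(X\<^sup>2) = \<parallel>X\<Psi>\<parallel>\<^sup>2\<close>, so an EPR state for \<open>(A \<otimes> I, I \<otimes> B)\<close> in the
  vector state of \<open>\<Psi> = a e\<^sub>1 \<otimes> e\<^sub>1 + b e\<^sub>2 \<otimes> e\<^sub>2\<close> forces \<open>(A \<otimes> I) \<Psi> = (I \<otimes> B) \<Psi>\<close>.
  Comparing the \<open>e\<^sub>1 \<otimes> e\<^sub>2\<close> and \<open>e\<^sub>2 \<otimes> e\<^sub>1\<close> components and using self-adjointness shows
  that the off-diagonal entry of \<open>A\<close> vanishes as soon as \<open>\<bar>a\<bar> \<noteq> \<bar>b\<bar>\<close>; this holds for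
  \<open>\<Psi>\<^sub>2\<close>, where \<open>\<bar>a\<bar> = 1/2\<close> and \<open>\<bar>b\<bar> = \<surd>3/2\<close>. So both projections on the first factor are
  diagonal, hence commute, and \<open>\<omega>(\<bar>[E\<^sub>1, F\<^sub>1]\<bar>\<^sup>2) = 0\<close>.\<close>

lemma vector_state_adj_mult:
  fixes X :: "'n::finite op"
  shows "vector_state \<Psi> (adj X ** X) = complex_of_real ((norm (X *v \<Psi>))\<^sup>2)"
proof -
  let ?v = "X *v \<Psi>"
  have "vector_state \<Psi> (adj X ** X)
        = (\<Sum>i\<in>UNIV. \<Sum>j\<in>UNIV. cnj (\<Psi> $ i) * cnj (X $ j $ i) * ?v $ j)"
    unfolding vector_state_def matrix_vector_mul_assoc[symmetric]
    by (simp add: adj_def matrix_vector_mult_def sum_distrib_left mult.assoc)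
  also have "\<dots> = (\<Sum>j\<in>UNIV. (\<Sum>i\<in>UNIV. cnj (\<Psi> $ i) * cnj (X $ j $ i)) * ?v $ j)"
    by (subst sum.swap) (simp add: sum_distrib_right)
  also have "\<dots> = (\<Sum>j\<in>UNIV. cnj (?v $ j) * ?v $ j)"
    by (simp add: matrix_vector_mult_def mult.commute)
  also have "\<dots> = (\<Sum>j\<in>UNIV. complex_of_real ((norm (?v $ j))\<^sup>2))"
    by (simp add: complex_norm_square mult.commute del: of_real_power)
  also have "\<dots> = complex_of_real ((norm ?v)\<^sup>2)"
    by (simp add: norm_vec_def L2_set_def sum_nonneg)
  finally show ?thesis .
qed

lemma vector_state_square_eq_0_imp:
  fixes X :: "'n::finite op"
  assumes "adj X = X" and "vector_state \<Psi> (X ** X) = 0"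
  shows "X *v \<Psi> = 0"
  using assms vector_state_adj_mult[of \<Psi> X] by simp

lemma adj_diff: "adj (X - Y) = adj X - adj Y"
  by (simp add: vec_eq_iff adj_def)

lemma adj_tensor_op: "adj (tensor_op A B) = tensor_op (adj A) (adj B)"
  by (simp add: vec_eq_iff adj_def tensor_op_def)

lemma adj_mat_1: "adj (mat 1) = mat 1"
  by (simp add: vec_eq_iff adj_def mat_def)

lemma tensor_op_mult:
  fixes A C :: "'m::finite op" and B D :: "'n::finite op"
  shows "tensor_op A B ** tensor_op C D = tensor_op (A ** C) (B ** D)"
proof -
  have "(\<Sum>r\<in>UNIV. A $ i $ fst r * B $ j $ snd r * (C $ fst r $ k * D $ snd r $ l))
      = (\<Sum>r1\<in>UNIV. A $ i $ r1 * C $ r1 $ k) * (\<Sum>r2\<in>UNIV. B $ j $ r2 * D $ r2 $ l)"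
    for i j k l
    unfolding sum_product UNIV_Times_UNIV[symmetric] sum.cartesian_product
    by (simp add: case_prod_beta mult_ac)
  then show ?thesis
    by (simp add: vec_eq_iff tensor_op_def matrix_matrix_mult_def)
qed

lemma tensor_op_diff_left: "tensor_op (A - C) B = tensor_op A B - tensor_op C B"
  by (simp add: vec_eq_iff tensor_op_def algebra_simps)

lemma tensor_op_zero_left: "tensor_op 0 B = 0"
  by (simp add: vec_eq_iff tensor_op_def)

lemma commutator_tensor_op_mat_1:
  "commutator (tensor_op A (mat 1)) (tensor_op C (mat 1)) = tensor_op (commutator A C) (mat 1)"
  by (simp add: commutator_def tensor_op_mult tensor_op_diff_left)

lemma tensor_op_mat_1_left_inj:
  assumes "tensor_op A (mat 1) = tensor_op C (mat 1)"
  shows "A = C"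
proof -
  have "tensor_op A (mat 1) $ (i, k) $ (j, k) = A $ i $ j" for i j k and A :: "'m::finite op"
    by (simp add: tensor_op_def mat_def)
  then show ?thesis using assms by (metis vec_eq_iff)
qed

lemma tensor_op_mat_1_right_inj:
  assumes "tensor_op (mat 1) A = tensor_op (mat 1) C"
  shows "A = C"
proof -
  have "tensor_op (mat 1) A $ (k, i) $ (k, j) = A $ i $ j" for i j k and A :: "'m::finite op"
    by (simp add: tensor_op_def mat_def)
  then show ?thesis using assms by (metis vec_eq_iff)
qed

lemma self_adjoint_tensor_op_mat_1_left:
  "adj (tensor_op A (mat 1)) = tensor_op A (mat 1) \<Longrightarrow> adj A = A"
  by (simp add: adj_tensor_op adj_mat_1 tensor_op_mat_1_left_inj)

lemma self_adjoint_tensor_op_mat_1_right: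
  "adj (tensor_op (mat 1) B) = tensor_op (mat 1) B \<Longrightarrow> adj B = B"
  by (simp add: adj_tensor_op adj_mat_1 tensor_op_mat_1_right_inj)

definition diagonal_op :: "'n::finite op \<Rightarrow> bool" where
  "diagonal_op M \<longleftrightarrow> (\<forall>i j. i \<noteq> j \<longrightarrow> M $ i $ j = 0)"

lemma diagonal_op_mult_commute:
  fixes A C :: "'n::finite op"
  assumes "diagonal_op A" and "diagonal_op C"
  shows "A ** C = C ** A"
proof -
  have "(A ** C) $ i $ j = (if i = j then A $ i $ i * C $ i $ i else 0)"
    if "diagonal_op A" "diagonal_op C" for A C :: "'n op" and i j
  proof -
    have "(A ** C) $ i $ j = A $ i $ i * C $ i $ j"
      unfolding matrix_matrix_mult_def using that(1)
      by (simp add: diagonal_op_def sum.remove[of UNIV i] sum.neutral)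
    then show ?thesis using that(2) by (simp add: diagonal_op_def)
  qed
  then show ?thesis using assms by (simp add: vec_eq_iff mult.commute)
qed

lemma diagonal_op_basis2_iff:
  "diagonal_op (M :: basis2 op) \<longleftrightarrow> M $ B1 $ B2 = 0 \<and> M $ B2 $ B1 = 0"
  by (metis (full_types) basis2.distinct basis2.exhaust diagonal_op_def)

lemma sum_basis2_pair:
  "(\<Sum>p\<in>UNIV. f p) = f (B1, B1) + f (B1, B2) + f (B2, B1) + f (B2, B2)"
  by (simp add: UNIV_Times_UNIV[symmetric] sum.cartesian_product UNIV_basis2 add.assoc)

definition schmidt_vec :: "complex \<Rightarrow> complex \<Rightarrow> complex^(basis2 \<times> basis2)" where
  "schmidt_vec a b = (\<chi> p. if p = (B1, B1) then a else if p = (B2, B2) then b else 0)"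

lemma Psi2_eq_schmidt_vec: "Psi2 = schmidt_vec (1/2) (of_real (sqrt 3 / 2))"
  unfolding Psi2_def schmidt_vec_def ..

lemma tensor_op_diff_mult_schmidt_vec:
  fixes A B :: "basis2 op"
  shows "((tensor_op A (mat 1) - tensor_op (mat 1) B) *v schmidt_vec a b) $ (B1, B2)
           = A $ B1 $ B2 * b - B $ B2 $ B1 * a"
    and "((tensor_op A (mat 1) - tensor_op (mat 1) B) *v schmidt_vec a b) $ (B2, B1)
           = A $ B2 $ B1 * a - B $ B1 $ B2 * b"
  by (simp_all add: matrix_vector_mult_def sum_basis2_pair tensor_op_def mat_def schmidt_vec_def)

text \<open>With \<open>x = A\<^sub>1\<^sub>2\<close> and \<open>y = cnj B\<^sub>1\<^sub>2\<close>, the two off-diagonal components say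
  \<open>x b = y a\<close> and \<open>x (cnj a) = y (cnj b)\<close>, hence \<open>x (\<bar>b\<bar>\<^sup>2 - \<bar>a\<bar>\<^sup>2) = 0\<close>.\<close>

lemma diagonal_op_if_tensor_op_agree_on_schmidt_vec:
  fixes A B :: "basis2 op"
  assumes "adj A = A" and "adj B = B"
    and agree: "(tensor_op A (mat 1) - tensor_op (mat 1) B) *v schmidt_vec a b = 0"
    and "cmod a \<noteq> cmod b"
  shows "diagonal_op A"
proof -
  have A21: "A $ B2 $ B1 = cnj (A $ B1 $ B2)"
    using arg_cong[OF assms(1), of "\<lambda>M. M $ B2 $ B1"] by (simp add: adj_def)
  have B21: "B $ B2 $ B1 = cnj (B $ B1 $ B2)"
    using arg_cong[OF assms(2), of "\<lambda>M. M $ B2 $ B1"] by (simp add: adj_def)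
  have 1: "A $ B1 $ B2 * b = cnj (B $ B1 $ B2) * a"
    using agree tensor_op_diff_mult_schmidt_vec(1)[of A B a b] B21 by simp
  have "cnj (A $ B1 $ B2) * a = B $ B1 $ B2 * b"
    using agree tensor_op_diff_mult_schmidt_vec(2)[of A B a b] A21 by simp
  then have 2: "A $ B1 $ B2 * cnj a = cnj (B $ B1 $ B2) * cnj b"
    by (metis complex_cnj_cnj complex_cnj_mult)
  have "A $ B1 $ B2 * (b * cnj b) = (A $ B1 $ B2 * b) * cnj b"
    by (simp only: mult.assoc)
  also have "\<dots> = (cnj (B $ B1 $ B2) * cnj b) * a"
    unfolding 1 by (simp only: mult_ac)
  also have "\<dots> = A $ B1 $ B2 * (a * cnj a)"
    unfolding 2[symmetric] by (simp only: mult_ac)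
  finally have "A $ B1 $ B2 * of_real ((cmod b)\<^sup>2 - (cmod a)\<^sup>2) = 0"
    by (simp add: complex_norm_square algebra_simps del: of_real_power)
  moreover have "(cmod b)\<^sup>2 - (cmod a)\<^sup>2 \<noteq> 0"
    using assms(4) by (simp add: power2_eq_iff_nonneg)
  ultimately have "A $ B1 $ B2 = 0"
    by (simp only: mult_eq_0_iff of_real_eq_0_iff) blast
  then show ?thesis by (simp add: diagonal_op_basis2_iff A21)
qed

lemma EPR_state_schmidt_vec_imp_diagonal:
  assumes "E \<in> N1" and "E' \<in> N2" and "adj E = E" and "adj E' = E'"
    and "EPR_state (vector_state (schmidt_vec a b)) E E'"
    and "cmod a \<noteq> cmod b"
  obtains A where "E = tensor_op A (mat 1)" and "diagonal_op A"
proof -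
  obtain A where A: "E = tensor_op A (mat 1)" using assms(1) by (auto simp: N1_def)
  obtain B where B: "E' = tensor_op (mat 1) B" using assms(2) by (auto simp: N2_def)
  have "(E - E') *v schmidt_vec a b = 0"
    using assms(3-5) by (intro vector_state_square_eq_0_imp) (simp_all add: adj_diff EPR_state_def)
  moreover have "adj A = A"
    using assms(3) unfolding A by (rule self_adjoint_tensor_op_mat_1_left)
  moreover have "adj B = B"
    using assms(4) unfolding B by (rule self_adjoint_tensor_op_mat_1_right)
  ultimately have "diagonal_op A"
    using diagonal_op_if_tensor_op_agree_on_schmidt_vec[OF _ _ _ assms(6)] unfolding A B by blast
  with A show thesis by (rule that)
qed

theorem not_EPR_incommensurable_schmidt_vec:
  assumes "cmod a \<noteq> cmod b"
  shows "\<not> EPR_incommensurable (vector_state (schmidt_vec a b)) N1 N2"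
proof
  assume "EPR_incommensurable (vector_state (schmidt_vec a b)) N1 N2"
  then obtain E1 F1 E2 F2 where mem: "E1 \<in> N1" "F1 \<in> N1" "E2 \<in> N2" "F2 \<in> N2"
    and proj: "is_projection E1" "is_projection F1" "is_projection E2" "is_projection F2"
    and EPR: "EPR_state (vector_state (schmidt_vec a b)) E1 E2"
      "EPR_state (vector_state (schmidt_vec a b)) F1 F2"
    and incomm: "vector_state (schmidt_vec a b) (abs_sq (commutator E1 F1)) \<noteq> 0"
    unfolding EPR_incommensurable_def by blast
  obtain A where A: "E1 = tensor_op A (mat 1)" "diagonal_op A"
    using EPR_state_schmidt_vec_imp_diagonal[OF mem(1,3) _ _ EPR(1) assms] proj
    by (auto simp: is_projection_def)
  obtain C where C: "F1 = tensor_op C (mat 1)" "diagonal_op C"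
    using EPR_state_schmidt_vec_imp_diagonal[OF mem(2,4) _ _ EPR(2) assms] proj
    by (auto simp: is_projection_def)
  have "commutator E1 F1 = tensor_op (commutator A C) (mat 1)"
    unfolding A C by (rule commutator_tensor_op_mat_1)
  also have "\<dots> = 0"
    using diagonal_op_mult_commute[OF A(2) C(2)] by (simp add: commutator_def tensor_op_zero_left)
  finally have "commutator E1 F1 = 0" .
  with incomm show False by (simp add: abs_sq_def vector_state_def)
qed

theorem mainTheorem4:
  shows "\<not> EPR_incommensurable (vector_state Psi2) N1 N2"
  unfolding Psi2_eq_schmidt_vec
  by (rule not_EPR_incommensurable_schmidt_vec) (simp add: real_sqrt_divide)

end
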